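(* Let $G=(V,E)$ be a finite, simple, undirected, connected graph with no isolated vertices, and suppose $G$ has at least one split independent set. Then every maximal split independent set $S$ of $G$ is a minimal split dominating set of $G$.
   Context: For $X\subseteq V$, $\langle X\rangle$ denotes the induced subgraph on $X$. A set $D\subseteq V$ is dominating if every vertex of $V\setminus D$ has a neighbor in $D$. A dominating set $S$ is a split dominating set if $\langle V\setminus S\rangle$ is disconnected or a $K_1$. A split dominating set $S$ is a minimal split dominating set if for every $u\in S$ the set $S\setminus\{u\}$ is not a split dominating set (i.e. either $S\setminus\{u\}$ is not dominating, or $\langle (V\setminus S)\cup\{u\}\rangle$ is connected). A set $S$ is a split independent set if $S$ is independent and $\langle V\setminus S\rangle$ is disconnected or a $K_1$. A split independent set $S$ is a maximal split independent set if for every $v\in V\setminus S$, either $S\cup\{v\}$ is not independent, or $\langle V\setminus (S\cup\{v\})\rangle$ is connected. *)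

theory Defs
  imports Main
begin

definition simple_graph :: "'a set \<Rightarrow> ('a \<Rightarrow> 'a \<Rightarrow> bool) \<Rightarrow> bool" where
  "simple_graph V E \<longleftrightarrow> finite V \<and> (\<forall>a b. E a b \<longrightarrow> a \<in> V \<and> b \<in> V)
     \<and> (\<forall>a b. E a b \<longrightarrow> E b a) \<and> (\<forall>a. \<not> E a a)"

definition induced_edge :: "('a \<Rightarrow> 'a \<Rightarrow> bool) \<Rightarrow> 'a set \<Rightarrow> 'a \<Rightarrow> 'a \<Rightarrow> bool" where
  "induced_edge E X a b \<longleftrightarrow> a \<in> X \<and> b \<in> X \<and> E a b"

definition connected_on :: "('a \<Rightarrow> 'a \<Rightarrow> bool) \<Rightarrow> 'a set \<Rightarrow> bool" where
  "connected_on E X \<longleftrightarrow> X \<noteq> {} \<and> (\<forall>x\<in>X. \<forall>y\<in>X. (induced_edge E X)\<^sup>*\<^sup>* x y)"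

definition disconnected_on :: "('a \<Rightarrow> 'a \<Rightarrow> bool) \<Rightarrow> 'a set \<Rightarrow> bool" where
  "disconnected_on E X \<longleftrightarrow> (\<exists>x\<in>X. \<exists>y\<in>X. \<not> (induced_edge E X)\<^sup>*\<^sup>* x y)"

definition no_isolated :: "'a set \<Rightarrow> ('a \<Rightarrow> 'a \<Rightarrow> bool) \<Rightarrow> bool" where
  "no_isolated V E \<longleftrightarrow> (\<forall>v\<in>V. \<exists>u\<in>V. E v u)"

definition dominating :: "'a set \<Rightarrow> ('a \<Rightarrow> 'a \<Rightarrow> bool) \<Rightarrow> 'a set \<Rightarrow> bool" where
  "dominating V E D \<longleftrightarrow> D \<subseteq> V \<and> (\<forall>v\<in>V - D. \<exists>d\<in>D. E v d)"

definition split_cond :: "'a set \<Rightarrow> ('a \<Rightarrow> 'a \<Rightarrow> bool) \<Rightarrow> 'a set \<Rightarrow> bool" where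
  "split_cond V E S \<longleftrightarrow> disconnected_on E (V - S) \<or> card (V - S) = 1"

definition split_dominating :: "'a set \<Rightarrow> ('a \<Rightarrow> 'a \<Rightarrow> bool) \<Rightarrow> 'a set \<Rightarrow> bool" where
  "split_dominating V E S \<longleftrightarrow> dominating V E S \<and> split_cond V E S"

definition minimal_split_dominating :: "'a set \<Rightarrow> ('a \<Rightarrow> 'a \<Rightarrow> bool) \<Rightarrow> 'a set \<Rightarrow> bool" where
  "minimal_split_dominating V E S \<longleftrightarrow> split_dominating V E S
     \<and> (\<forall>u\<in>S. \<not> split_dominating V E (S - {u}))"

definition independent :: "'a set \<Rightarrow> ('a \<Rightarrow> 'a \<Rightarrow> bool) \<Rightarrow> 'a set \<Rightarrow> bool" where
  "independent V E S \<longleftrightarrow> S \<subseteq> V \<and> (\<forall>a\<in>S. \<forall>b\<in>S. \<not> E a b)"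

definition split_independent :: "'a set \<Rightarrow> ('a \<Rightarrow> 'a \<Rightarrow> bool) \<Rightarrow> 'a set \<Rightarrow> bool" where
  "split_independent V E S \<longleftrightarrow> independent V E S \<and> split_cond V E S"

definition maximal_split_independent :: "'a set \<Rightarrow> ('a \<Rightarrow> 'a \<Rightarrow> bool) \<Rightarrow> 'a set \<Rightarrow> bool" where
  "maximal_split_independent V E S \<longleftrightarrow> split_independent V E S
     \<and> (\<forall>v\<in>V - S. \<not> independent V E (S \<union> {v}) \<or> connected_on E (V - (S \<union> {v})))"

end

theory Submission
  imports Defs
begin

text \<open>Maximality of S already forces domination: a vertex v outside S with no neighbour in S
  could be added to S keeping it independent, so by maximality V - (S \<union> {v}) is connected;
  since v has a neighbour there, V - S is connected too and has at least two vertices,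
  contradicting the split condition. Minimality is immediate from independence: after
  removing u from S, the vertex u has no neighbour left in S - {u}.\<close>

lemma induced_edge_rtranclp_mono:
  assumes "A \<subseteq> B" and "(induced_edge E A)\<^sup>*\<^sup>* x y"
  shows "(induced_edge E B)\<^sup>*\<^sup>* x y"
  using assms(2)
  by (rule rtranclp_mono[THEN predicate2D, rotated])
    (use assms(1) in \<open>auto simp: induced_edge_def\<close>)

lemma connected_on_not_disconnected_on: "connected_on E X \<Longrightarrow> \<not> disconnected_on E X"
  by (simp add: connected_on_def disconnected_on_def)

lemma connected_on_insert:
  assumes "symp E" and "connected_on E W" and "w \<in> W" and "E v w"
  shows "connected_on E (insert v W)"
proof -
  let ?R = "induced_edge E (insert v W)"
  have "equivp ?R\<^sup>*\<^sup>*"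
    using assms(1) by (intro equivp_rtranclp) (auto simp: induced_edge_def symp_def)
  moreover have "?R\<^sup>*\<^sup>* x w" if "x \<in> insert v W" for x
  proof (cases "x = v")
    case True
    then show ?thesis using assms(3,4) by (auto simp: induced_edge_def)
  next
    case False
    then have "(induced_edge E W)\<^sup>*\<^sup>* x w"
      using that assms(2,3) by (auto simp: connected_on_def)
    then show ?thesis by (rule induced_edge_rtranclp_mono[rotated]) auto
  qed
  ultimately show ?thesis
    unfolding connected_on_def by (metis equivp_symp equivp_transp insert_not_empty)
qed

lemma independent_insert:
  assumes "symp E" and "independent V E S" and "v \<in> V" and "\<not> E v v" and "\<forall>d\<in>S. \<not> E v d"
  shows "independent V E (insert v S)"
  using assms by (auto simp: independent_def symp_def)

lemma maximal_split_independent_dominating: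
  assumes G: "simple_graph V E" and "no_isolated V E"
    and S: "maximal_split_independent V E S"
  shows "dominating V E S"
  unfolding dominating_def
proof (intro conjI ballI)
  have sym: "symp E" and irrefl: "\<And>a. \<not> E a a" and indep: "independent V E S"
    using G S by (auto simp: simple_graph_def maximal_split_independent_def
        split_independent_def intro: sympI)
  then show "S \<subseteq> V" by (simp add: independent_def)
  fix v assume v: "v \<in> V - S"
  show "\<exists>d\<in>S. E v d"
  proof (rule ccontr)
    assume no_nbr: "\<not> (\<exists>d\<in>S. E v d)"
    let ?W = "V - (S \<union> {v})"
    have "independent V E (insert v S)"
      using independent_insert[OF sym indep] v irrefl no_nbr by blast
    with S v have W_conn: "connected_on E ?W"
      by (auto simp: maximal_split_independent_def)
    obtain w where "w \<in> V" "E v w"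
      using assms(2) v by (auto simp: no_isolated_def)
    with no_nbr irrefl have "w \<in> ?W" by auto
    from \<open>w \<in> ?W\<close> \<open>E v w\<close> have "connected_on E (insert v ?W)"
      by (rule connected_on_insert[OF sym W_conn])
    moreover have "insert v ?W = V - S" using v by auto
    moreover have "card (V - S) \<noteq> 1"
    proof
      assume "card (V - S) = 1"
      then obtain x where "V - S = {x}" by (rule card_1_singletonE)
      with \<open>w \<in> ?W\<close> v show False by auto
    qed
    ultimately show False
      using S connected_on_not_disconnected_on
      by (auto simp: maximal_split_independent_def split_independent_def split_cond_def)
  qed
qed

lemma independent_remove_not_dominating:
  assumes "independent V E S" and "u \<in> S"
  shows "\<not> dominating V E (S - {u})"
  using assms by (auto simp: independent_def dominating_def)

theorem mainTheorem2:
  fixes V :: "'a set" and E :: "'a \<Rightarrow> 'a \<Rightarrow> bool"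
  assumes "simple_graph V E"
    and "connected_on E V"
    and "no_isolated V E"
    and "\<exists>S. split_independent V E S"
  shows "\<forall>S. maximal_split_independent V E S \<longrightarrow> minimal_split_dominating V E S"
proof (intro allI impI)
  fix S assume S: "maximal_split_independent V E S"
  then have "independent V E S" and "split_cond V E S"
    by (auto simp: maximal_split_independent_def split_independent_def)
  moreover have "dominating V E S"
    using maximal_split_independent_dominating[OF assms(1,3) S] .
  ultimately show "minimal_split_dominating V E S"
    using independent_remove_not_dominating
    by (metis minimal_split_dominating_def split_dominating_def)
qed

end
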